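(* Let $(\mathcal{G},S)$ be an instance of \textsc{Temporally Disjoint Walks} where $\mathcal{G}$ is a temporal line, and let $\mathcal{S}$ be a solution that minimizes the sum of the lengths of its walks among all solutions. Let $W\in\mathcal{S}$ be a temporal $(s,z)$-walk in which the transitions $(a,b,t),(b,a,t')$ with $t<t'$ are consecutive. Then there exists a temporal $(s',z')$-walk $W'\neq W$ in $\mathcal{S}$ such that $W'$ contains at least one of the transitions $(s',a',t'')$ or $(a',z',t'')$ for some vertex $a'$ and some $t''$ with $t<t''<t'$, where the distance between $a$ and $a'$ in the underlying path of $\mathcal{G}$ is at most $|S|$.
   Context: A temporal graph $\mathcal{G}=(V,E_1,\ldots,E_T)$ has vertex set $V$ and edge sets $E_1,\ldots,E_T\subseteq\binom{V}{2}$; it is a temporal line if its underlying graph $(V,\bigcup_i E_i)$ is a path. A temporal $(s,z)$-walk of length $k$ from $s=v_0$ to $z=v_k$ is a sequence of transitions $((v_{i-1},v_i,t_i))_{i=1}^k$ with $\{v_{i-1},v_i\}\in E_{t_i}$ and $t_1<\cdots<t_k$. It occupies $v_i$ during $[t_i,t_{i+1}]$ for $i\in[k-1]$, $v_0$ during $[t_1,t_1]$ and $v_k$ during $[t_k,t_k]$. Two temporal walks are temporally disjoint unless some vertex is occupied by both during intersecting time intervals. \textsc{Temporally Disjoint Walks} asks, given $\mathcal{G}$ and a multiset $S\subseteq V\times V$ of source-sink pairs, for pairwise temporally disjoint temporal $(s_i,z_i)$-walks, one for each $(s_i,z_i)\in S$; a solution $\mathcal{S}$ is such a family, and $|S|$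 is the number of source-sink pairs. *)

theory Defs
  imports Main
begin

(* A temporal graph is given by a vertex set V, a lifetime T and edge sets E t
   for t = 1..T (edge sets at other times are ignored). *)

type_synonym 'a transition = "'a \<times> 'a \<times> nat"

definition tsrc :: "'a transition \<Rightarrow> 'a" where "tsrc x = fst x"
definition ttgt :: "'a transition \<Rightarrow> 'a" where "ttgt x = fst (snd x)"
definition ttime :: "'a transition \<Rightarrow> nat" where "ttime x = snd (snd x)"

definition temporal_graph :: "'a set \<Rightarrow> nat \<Rightarrow> (nat \<Rightarrow> 'a set set) \<Rightarrow> bool" where
  "temporal_graph V T E \<longleftrightarrow> finite V \<and>
     (\<forall>t \<in> {1..T}. \<forall>e \<in> E t. \<exists>u v. e = {u, v} \<and> u \<noteq> v \<and> u \<in> V \<and> v \<in> V)"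

definition underlying_edges :: "nat \<Rightarrow> (nat \<Rightarrow> 'a set set) \<Rightarrow> 'a set set" where
  "underlying_edges T E = (\<Union>t \<in> {1..T}. E t)"

definition temporal_line :: "'a set \<Rightarrow> nat \<Rightarrow> (nat \<Rightarrow> 'a set set) \<Rightarrow> bool" where
  "temporal_line V T E \<longleftrightarrow> temporal_graph V T E \<and>
     (\<exists>p. distinct p \<and> set p = V \<and>
          underlying_edges T E = {{p ! i, p ! Suc i} | i. Suc i < length p})"

definition underlying_dist :: "nat \<Rightarrow> (nat \<Rightarrow> 'a set set) \<Rightarrow> 'a \<Rightarrow> 'a \<Rightarrow> nat" where
  "underlying_dist T E u v = (LEAST n. \<exists>p. length p = Suc n \<and> hd p = u \<and> last p = v \<and>
      (\<forall>i. Suc i < length p \<longrightarrow> {p ! i, p ! Suc i} \<in> underlying_edges T E))"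

definition temporal_walk ::
  "'a set \<Rightarrow> nat \<Rightarrow> (nat \<Rightarrow> 'a set set) \<Rightarrow> 'a \<Rightarrow> 'a \<Rightarrow> 'a transition list \<Rightarrow> bool" where
  "temporal_walk V T E s z W \<longleftrightarrow>
     (W = [] \<longrightarrow> s = z) \<and>
     (W \<noteq> [] \<longrightarrow> tsrc (hd W) = s \<and> ttgt (last W) = z) \<and>
     (\<forall>i < length W. {tsrc (W ! i), ttgt (W ! i)} \<in> E (ttime (W ! i))
                      \<and> 1 \<le> ttime (W ! i) \<and> ttime (W ! i) \<le> T) \<and>
     (\<forall>i. Suc i < length W \<longrightarrow> ttgt (W ! i) = tsrc (W ! Suc i)
                            \<and> ttime (W ! i) < ttime (W ! Suc i))"

(* occupation: triples (v, lo, hi) meaning the walk occupies v during [lo, hi] *)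
definition occupations :: "'a transition list \<Rightarrow> ('a \<times> nat \<times> nat) set" where
  "occupations W =
     (if W = [] then {} else
       {(tsrc (hd W), ttime (hd W), ttime (hd W)), (ttgt (last W), ttime (last W), ttime (last W))}
       \<union> {(ttgt (W ! i), ttime (W ! i), ttime (W ! Suc i)) | i. Suc i < length W})"

definition temporally_disjoint :: "'a transition list \<Rightarrow> 'a transition list \<Rightarrow> bool" where
  "temporally_disjoint W1 W2 \<longleftrightarrow>
     (\<forall>(v1, l1, h1) \<in> occupations W1. \<forall>(v2, l2, h2) \<in> occupations W2.
        v1 = v2 \<longrightarrow> \<not> (l1 \<le> h2 \<and> l2 \<le> h1))"

(* a solution for the source-sink pairs S (a list representing the multiset) is a
   list of walks, the i-th being an (s_i,z_i)-walk, pairwise temporally disjoint *)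
definition tdw_solution ::
  "'a set \<Rightarrow> nat \<Rightarrow> (nat \<Rightarrow> 'a set set) \<Rightarrow> ('a \<times> 'a) list \<Rightarrow> 'a transition list list \<Rightarrow> bool" where
  "tdw_solution V T E S Ws \<longleftrightarrow> length Ws = length S \<and>
     (\<forall>i < length S. temporal_walk V T E (fst (S ! i)) (snd (S ! i)) (Ws ! i)) \<and>
     (\<forall>i < length S. \<forall>j < length S. i \<noteq> j \<longrightarrow> temporally_disjoint (Ws ! i) (Ws ! j))"

definition total_length :: "'a transition list list \<Rightarrow> nat" where
  "total_length Ws = (\<Sum>W \<leftarrow> Ws. length W)"

end

theory Submission
  imports Defs
begin

(* Deleting the bounce (a,b,t),(b,a,t') from W gives a shorter walk with the same endpoints, so by
   minimality some other walk W1 occupies a at a time strictly between t and t'.  As W sits on b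
   throughout [t,t'], W1 neither arrives from nor leaves towards b; on a path, a has at most one
   other neighbour x.  Hence W1 either starts or ends with a transition at a during (t,t'), or it
   bounces (x,a,l),(a,x,h) with t < l < h < t', and we recurse on W1.  The walks met along the way
   are pairwise different, because each has a transition strictly inside every earlier bounce
   interval, which the walk bouncing there cannot have.  So the recursion ends after at most |S|
   steps, each moving one edge away from a. *)

definition consecutive_pairs :: "'b list \<Rightarrow> ('b \<times> 'b) set" where
  "consecutive_pairs xs = set (zip xs (tl xs))"

lemma consecutive_pairs_conv_nth:
  "consecutive_pairs xs = {(xs ! i, xs ! Suc i) | i. Suc i < length xs}"
  unfolding consecutive_pairs_def set_zip by (auto simp: nth_tl)

lemma consecutive_pairs_Nil [simp]: "consecutive_pairs [] = {}"
  by (simp add: consecutive_pairs_def)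

lemma consecutive_pairs_Cons:
  "consecutive_pairs (x # xs) = (if xs = [] then {} else insert (x, hd xs) (consecutive_pairs xs))"
  by (cases xs) (auto simp: consecutive_pairs_def)

lemma consecutive_pairs_append:
  "consecutive_pairs (xs @ ys) =
     consecutive_pairs xs \<union> consecutive_pairs ys \<union> (if xs = [] \<or> ys = [] then {} else {(last xs, hd ys)})"
  by (induction xs) (auto simp: consecutive_pairs_Cons)

lemma consecutive_pairs_subset: "consecutive_pairs xs \<subseteq> set xs \<times> set xs"
  by (auto simp: consecutive_pairs_conv_nth)

lemma in_consecutive_pairs_iff: "(x, y) \<in> consecutive_pairs xs \<longleftrightarrow> (\<exists>P Q. xs = P @ x # y # Q)"
proof
  assume "(x, y) \<in> consecutive_pairs xs"
  then obtain i where i: "Suc i < length xs" "x = xs ! i" "y = xs ! Suc i"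
    unfolding consecutive_pairs_conv_nth by blast
  then have "xs = take i xs @ x # y # drop (Suc (Suc i)) xs"
    by (simp add: Cons_nth_drop_Suc)
  then show "\<exists>P Q. xs = P @ x # y # Q" by blast
qed (auto simp: consecutive_pairs_append consecutive_pairs_Cons)

lemma successively_iff_consecutive_pairs:
  "successively R xs \<longleftrightarrow> (\<forall>(x, y) \<in> consecutive_pairs xs. R x y)"
  by (auto simp: successively_conv_nth consecutive_pairs_conv_nth)

definition linked :: "'a transition \<Rightarrow> 'a transition \<Rightarrow> bool" where
  "linked e e' \<longleftrightarrow> ttgt e = tsrc e' \<and> ttime e < ttime e'"

lemma transition_eta: "e = (tsrc e, ttgt e, ttime e)"
  by (simp add: tsrc_def ttgt_def ttime_def)

lemma temporal_walk_iff:
  "temporal_walk V T E s z W \<longleftrightarrow>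
     (W = [] \<longrightarrow> s = z) \<and>
     (W \<noteq> [] \<longrightarrow> tsrc (hd W) = s \<and> ttgt (last W) = z) \<and>
     (\<forall>e \<in> set W. {tsrc e, ttgt e} \<in> E (ttime e) \<and> 1 \<le> ttime e \<and> ttime e \<le> T) \<and>
     successively linked W"
  unfolding temporal_walk_def successively_conv_nth linked_def all_set_conv_all_nth by blast

lemma walk_linked: "temporal_walk V T E s z W \<Longrightarrow> (e, e') \<in> consecutive_pairs W \<Longrightarrow> linked e e'"
  unfolding temporal_walk_iff successively_iff_consecutive_pairs by blast

lemma walk_sorted_ttime:
  assumes "temporal_walk V T E s z W"
  shows "sorted_wrt (\<lambda>e e'. ttime e < ttime e') W"
proof -
  have "successively (\<lambda>e e'. ttime e < ttime e') W"
    using assms unfolding temporal_walk_iff linked_def by (auto elim: successively_mono)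
  then show ?thesis by (simp add: successively_conv_sorted_wrt transp_def)
qed

lemma walk_no_transition_between:
  assumes "temporal_walk V T E s z W" "(e1, e2) \<in> consecutive_pairs W" "e \<in> set W"
  shows "ttime e \<le> ttime e1 \<or> ttime e2 \<le> ttime e"
proof -
  obtain P Q where W: "W = P @ e1 # e2 # Q" using assms(2) in_consecutive_pairs_iff by metis
  show ?thesis using walk_sorted_ttime[OF assms(1)] assms(3) unfolding W
    by (auto simp: sorted_wrt_append less_imp_le)
qed

lemma walk_underlying_edge:
  "temporal_walk V T E s z W \<Longrightarrow> e \<in> set W \<Longrightarrow> {tsrc e, ttgt e} \<in> underlying_edges T E"
  unfolding temporal_walk_iff underlying_edges_def by auto

lemma occupations_consecutive_pairs:
  "occupations W = (if W = [] then {} else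
     {(tsrc (hd W), ttime (hd W), ttime (hd W)), (ttgt (last W), ttime (last W), ttime (last W))}
     \<union> (\<lambda>(e, e'). (ttgt e, ttime e, ttime e')) ` consecutive_pairs W)"
  unfolding occupations_def consecutive_pairs_conv_nth by auto

lemma occupationsE:
  assumes "(v, l, h) \<in> occupations W"
  obtains "W \<noteq> []" "v = tsrc (hd W)" "l = ttime (hd W)" "h = l"
    | "W \<noteq> []" "v = ttgt (last W)" "l = ttime (last W)" "h = l"
    | e e' where "(e, e') \<in> consecutive_pairs W" "v = ttgt e" "l = ttime e" "h = ttime e'"
proof -
  have "W \<noteq> []" using assms by (auto simp: occupations_def split: if_splits)
  then consider "(v, l, h) = (tsrc (hd W), ttime (hd W), ttime (hd W))"
    | "(v, l, h) = (ttgt (last W), ttime (last W), ttime (last W))"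
    | i where "Suc i < length W" "(v, l, h) = (ttgt (W ! i), ttime (W ! i), ttime (W ! Suc i))"
    using assms unfolding occupations_def by auto
  then show thesis
  proof cases
    case 3
    then show thesis using that(3)[of "W ! i" "W ! Suc i"] by (auto simp: consecutive_pairs_conv_nth)
  qed (use that \<open>W \<noteq> []\<close> in auto)
qed

definition occupies :: "'a transition list \<Rightarrow> 'a \<Rightarrow> nat \<Rightarrow> bool" where
  "occupies W v \<tau> \<longleftrightarrow> (\<exists>l h. (v, l, h) \<in> occupations W \<and> l \<le> \<tau> \<and> \<tau> \<le> h)"

lemma occupiesI: "(v, l, h) \<in> occupations W \<Longrightarrow> l \<le> \<tau> \<Longrightarrow> \<tau> \<le> h \<Longrightarrow> occupies W v \<tau>"
  unfolding occupies_def by blast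

lemma walk_occupation_le:
  assumes "temporal_walk V T E s z W" "(v, l, h) \<in> occupations W"
  shows "l \<le> h"
  using assms(2) walk_linked[OF assms(1)]
  unfolding occupations_consecutive_pairs linked_def by (auto split: if_splits intro: less_imp_le)

lemma temporally_disjoint_iff_occupies:
  assumes "temporal_walk V T E s z W" "temporal_walk V T E s' z' W'"
  shows "temporally_disjoint W W' \<longleftrightarrow> (\<forall>v \<tau>. \<not> (occupies W v \<tau> \<and> occupies W' v \<tau>))"
proof
  assume "temporally_disjoint W W'"
  then show "\<forall>v \<tau>. \<not> (occupies W v \<tau> \<and> occupies W' v \<tau>)"
    unfolding temporally_disjoint_def occupies_def by fastforce
next
  assume pointwise: "\<forall>v \<tau>. \<not> (occupies W v \<tau> \<and> occupies W' v \<tau>)"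
  have "\<not> (l \<le> h' \<and> l' \<le> h)" if "(v, l, h) \<in> occupations W" "(v, l', h') \<in> occupations W'"
    for v l h l' h'
  proof
    assume "l \<le> h' \<and> l' \<le> h"
    moreover have "l \<le> h" "l' \<le> h'"
      using walk_occupation_le[OF assms(1) that(1)] walk_occupation_le[OF assms(2) that(2)] .
    ultimately have "occupies W v (max l l')" "occupies W' v (max l l')"
      unfolding occupies_def using that by (metis max.bounded_iff max.cobounded1 max.cobounded2)+
    then show False using pointwise by blast
  qed
  then show "temporally_disjoint W W'" unfolding temporally_disjoint_def by blast
qed

lemma temporally_disjoint_sym: "temporally_disjoint W W' \<longleftrightarrow> temporally_disjoint W' W"
  unfolding temporally_disjoint_def by fastforce

lemma not_temporally_disjoint_self: "W \<noteq> [] \<Longrightarrow> \<not> temporally_disjoint W W"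
  unfolding temporally_disjoint_def occupations_def by auto

lemma occupies_tsrc:
  assumes "temporal_walk V T E s z W" "e \<in> set W"
  shows "occupies W (tsrc e) (ttime e)"
proof -
  obtain P Q where W: "W = P @ e # Q" using assms(2) split_list by metis
  show ?thesis
  proof (cases "P = []")
    case True
    then show ?thesis unfolding occupies_def occupations_consecutive_pairs W by auto
  next
    case False
    then have "(last P, e) \<in> consecutive_pairs W" unfolding W by (simp add: consecutive_pairs_append)
    moreover from this have "linked (last P) e" using walk_linked[OF assms(1)] by blast
    ultimately show ?thesis unfolding occupies_def occupations_consecutive_pairs linked_def
      by (force simp: W)
  qed
qed

lemma occupies_ttgt:
  assumes "temporal_walk V T E s z W" "e \<in> set W"
  shows "occupies W (ttgt e) (ttime e)"
proof -
  obtain P Q where W: "W = P @ e # Q" using assms(2) split_list by metis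
  show ?thesis
  proof (cases "Q = []")
    case True
    then show ?thesis unfolding occupies_def occupations_consecutive_pairs W by auto
  next
    case False
    then have "(e, hd Q) \<in> consecutive_pairs W"
      unfolding W by (simp add: consecutive_pairs_append consecutive_pairs_Cons)
    moreover from this have "linked e (hd Q)" using walk_linked[OF assms(1)] by blast
    ultimately show ?thesis unfolding occupies_def occupations_consecutive_pairs linked_def
      by (force simp: W)
  qed
qed

lemma occupies_step:
  assumes "(e, e') \<in> consecutive_pairs W" "ttime e \<le> \<tau>" "\<tau> \<le> ttime e'"
  shows "occupies W (ttgt e) \<tau>"
proof -
  have "W \<noteq> []" using assms(1) by auto
  then have "(ttgt e, ttime e, ttime e') \<in> occupations W"
    using assms(1) unfolding occupations_consecutive_pairs by (auto intro: rev_image_eqI)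
  then show ?thesis using assms(2,3) unfolding occupies_def by blast
qed

lemma walk_remove_bounce:
  assumes "temporal_walk V T E s z (P @ (a, b, t) # (b, a, t') # Q)"
  shows "temporal_walk V T E s z (P @ Q)"
  using assms unfolding temporal_walk_iff
  by (cases "P = []"; cases "Q = []")
     (auto simp: successively_append_iff successively_Cons linked_def tsrc_def ttgt_def ttime_def)

lemma occupies_remove_bounce:
  assumes w: "temporal_walk V T E s z (P @ (a, b, t) # (b, a, t') # Q)"
    (is "temporal_walk _ _ _ _ _ ?W")
    and occ: "occupies (P @ Q) v \<tau>"
  shows "occupies ?W v \<tau> \<or> (v = a \<and> t < \<tau> \<and> \<tau> < t')"
proof -
  obtain l h where lh: "(v, l, h) \<in> occupations (P @ Q)" "l \<le> \<tau>" "\<tau> \<le> h"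
    using occ unfolding occupies_def by blast
  from lh(1) show ?thesis
  proof (cases rule: occupationsE)
    case 1
    have "hd (P @ Q) \<in> set ?W" using 1(1) by (auto simp: hd_append)
    moreover have "\<tau> = ttime (hd (P @ Q))" using 1 lh(2,3) by simp
    ultimately show ?thesis using occupies_tsrc[OF w] 1(2) by simp
  next
    case 2
    have "last (P @ Q) \<in> set ?W" using 2(1) by (auto simp: last_append)
    moreover have "\<tau> = ttime (last (P @ Q))" using 2 lh(2,3) by simp
    ultimately show ?thesis using occupies_ttgt[OF w] 2(2) by simp
  next
    case (3 e e')
    from 3(1) consider (kept) "(e, e') \<in> consecutive_pairs P \<union> consecutive_pairs Q"
      | (junction) "P \<noteq> []" "Q \<noteq> []" "e = last P" "e' = hd Q"
      unfolding consecutive_pairs_append by (auto split: if_splits)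
    then show ?thesis
    proof cases
      case kept
      then have "(e, e') \<in> consecutive_pairs ?W"
        by (auto simp: consecutive_pairs_append consecutive_pairs_Cons)
      then show ?thesis using occupies_step[of e e' ?W \<tau>] 3(2-4) lh(2,3) by simp
    next
      case junction
      have before: "(last P, (a, b, t)) \<in> consecutive_pairs ?W"
        and after: "((b, a, t'), hd Q) \<in> consecutive_pairs ?W"
        using junction by (auto simp: consecutive_pairs_append consecutive_pairs_Cons)
      have "v = a" using walk_linked[OF w before] junction 3 by (simp add: linked_def tsrc_def)
      consider "\<tau> \<le> t" | "t' \<le> \<tau>" | "t < \<tau>" "\<tau> < t'" by linarith
      then show ?thesis
      proof cases
        case 1
        then show ?thesis
          using occupies_step[OF before] junction 3 lh(2) \<open>v = a\<close> by (simp add: ttime_def)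
      next
        case 2
        then show ?thesis
          using occupies_step[OF after] junction 3 lh(3) \<open>v = a\<close> by (simp add: ttime_def ttgt_def)
      qed (simp add: \<open>v = a\<close>)
    qed
  qed
qed

lemma total_length_list_update:
  "i < length Ws \<Longrightarrow> total_length (Ws[i := W]) + length (Ws ! i) = total_length Ws + length W"
  unfolding total_length_def by (induction Ws arbitrary: i) (auto split: nat.splits)

lemma tdw_solution_walk:
  "tdw_solution V T E S Ws \<Longrightarrow> j < length S \<Longrightarrow>
    temporal_walk V T E (fst (S ! j)) (snd (S ! j)) (Ws ! j)"
  unfolding tdw_solution_def by blast

lemma tdw_solution_disjoint:
  "tdw_solution V T E S Ws \<Longrightarrow> i < length S \<Longrightarrow> j < length S \<Longrightarrow> i \<noteq> j \<Longrightarrow>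
    temporally_disjoint (Ws ! i) (Ws ! j)"
  unfolding tdw_solution_def by blast

lemma tdw_solution_update:
  assumes "tdw_solution V T E S Ws" "i < length S"
    and "temporal_walk V T E (fst (S ! i)) (snd (S ! i)) W"
    and "\<And>j. j < length S \<Longrightarrow> j \<noteq> i \<Longrightarrow> temporally_disjoint W (Ws ! j)"
  shows "tdw_solution V T E S (Ws[i := W])"
proof -
  have len: "length Ws = length S" using assms(1) unfolding tdw_solution_def by blast
  have "temporally_disjoint (Ws[i := W] ! p) (Ws[i := W] ! q)"
    if "p < length S" "q < length S" "p \<noteq> q" for p q
  proof -
    consider "p = i" | "q = i" | "p \<noteq> i" "q \<noteq> i" by blast
    then show ?thesis
    proof cases
      case 1
      then show ?thesis using assms(4)[of q] that len by simp
    next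
      case 2
      then show ?thesis using assms(4)[of p] that len by (simp add: temporally_disjoint_sym[of _ W])
    next
      case 3
      then show ?thesis using tdw_solution_disjoint[OF assms(1)] that by simp
    qed
  qed
  moreover have "temporal_walk V T E (fst (S ! j)) (snd (S ! j)) (Ws[i := W] ! j)"
    if "j < length S" for j
    using assms(3) tdw_solution_walk[OF assms(1) that] that len by (cases "j = i") simp_all
  ultimately show ?thesis using len unfolding tdw_solution_def by simp
qed

lemma bounce_blocked:
  assumes sol: "tdw_solution V T E S Ws"
    and opt: "\<And>Ws'. tdw_solution V T E S Ws' \<Longrightarrow> total_length Ws \<le> total_length Ws'"
    and i: "i < length S" and bounce: "((a, b, t), (b, a, t')) \<in> consecutive_pairs (Ws ! i)"
  shows "\<exists>j < length S. j \<noteq> i \<and> (\<exists>\<tau>. t < \<tau> \<and> \<tau> < t' \<and> occupies (Ws ! j) a \<tau>)"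
proof (rule ccontr)
  assume unblocked: "\<not> ?thesis"
  obtain P Q where Wi: "Ws ! i = P @ (a, b, t) # (b, a, t') # Q"
    using bounce in_consecutive_pairs_iff by metis
  note wi = tdw_solution_walk[OF sol i, unfolded Wi]
  have "tdw_solution V T E S (Ws[i := P @ Q])"
  proof (rule tdw_solution_update[OF sol i walk_remove_bounce[OF wi]])
    fix j assume j: "j < length S" "j \<noteq> i"
    note wj = tdw_solution_walk[OF sol j(1)]
    have "temporally_disjoint (Ws ! i) (Ws ! j)"
      using tdw_solution_disjoint[OF sol i j(1)] j(2) by simp
    then have old_free: "\<not> (occupies (Ws ! i) v \<sigma> \<and> occupies (Ws ! j) v \<sigma>)" for v \<sigma>
      using temporally_disjoint_iff_occupies[OF tdw_solution_walk[OF sol i] wj] by blast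
    show "temporally_disjoint (P @ Q) (Ws ! j)"
      unfolding temporally_disjoint_iff_occupies[OF walk_remove_bounce[OF wi] wj]
    proof (intro allI notI)
      fix v \<sigma> assume both: "occupies (P @ Q) v \<sigma> \<and> occupies (Ws ! j) v \<sigma>"
      from occupies_remove_bounce[OF wi conjunct1[OF both]] show False
      proof
        assume "occupies (P @ (a, b, t) # (b, a, t') # Q) v \<sigma>"
        then show False using old_free[of v \<sigma>] both unfolding Wi by simp
      next
        assume "v = a \<and> t < \<sigma> \<and> \<sigma> < t'"
        then show False using unblocked j both by blast
      qed
    qed
  qed
  then have "total_length Ws \<le> total_length (Ws[i := P @ Q])" by (rule opt)
  moreover have "length Ws = length S" using sol unfolding tdw_solution_def by blast
  then have "total_length (Ws[i := P @ Q]) + length (Ws ! i) = total_length Ws + length (P @ Q)"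
    using i by (intro total_length_list_update) simp
  ultimately show False unfolding Wi by simp
qed

lemma temporal_line_neighbour_unique:
  assumes "temporal_line V T E"
    and "{a, x} \<in> underlying_edges T E" "{a, y} \<in> underlying_edges T E" "{a, b} \<in> underlying_edges T E"
    and "x \<noteq> b" "y \<noteq> b"
  shows "x = y"
proof -
  obtain p where p: "distinct p" and ue: "underlying_edges T E = {{p ! i, p ! Suc i} | i. Suc i < length p}"
    using assms(1) unfolding temporal_line_def by blast
  obtain i0 where "{a, b} = {p ! i0, p ! Suc i0}" "Suc i0 < length p"
    using assms(4) ue by auto
  then obtain m where m: "m < length p" "a = p ! m"
    by (metis Suc_lessD doubleton_eq_iff)
  have "w = p ! Suc m \<or> w = p ! (m - 1)" if edge: "{a, w} \<in> underlying_edges T E" for w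
  proof -
    obtain i where i: "{a, w} = {p ! i, p ! Suc i}" "Suc i < length p"
      using edge ue by auto
    then consider "a = p ! i" "w = p ! Suc i" | "a = p ! Suc i" "w = p ! i"
      by (auto simp: doubleton_eq_iff)
    then show ?thesis
    proof cases
      case 1
      then have "i = m" using m i p nth_eq_iff_index_eq by fastforce
      then show ?thesis using 1 by simp
    next
      case 2
      then have "Suc i = m" using m i p nth_eq_iff_index_eq by fastforce
      then show ?thesis using 2 by auto
    qed
  qed
  then show ?thesis using assms(2-6) by metis
qed

lemma blocker_cases:
  assumes line: "temporal_line V T E"
    and wi: "temporal_walk V T E si zi Wi" and bounce: "((a, b, t), (b, a, t')) \<in> consecutive_pairs Wi"
    and wj: "temporal_walk V T E sj zj Wj" and disjoint: "temporally_disjoint Wi Wj"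
    and occ: "occupies Wj a \<tau>" and \<tau>: "t < \<tau>" "\<tau> < t'"
  shows "(\<exists>x l. t < l \<and> l < t' \<and> {a, x} \<in> underlying_edges T E \<and>
            ((sj, x, l) \<in> set Wj \<or> (x, zj, l) \<in> set Wj))
       \<or> (\<exists>x l h. t < l \<and> h < t' \<and> ((x, a, l), (a, x, h)) \<in> consecutive_pairs Wj)"
proof -
  have free: "\<not> occupies Wj v \<sigma>" if "occupies Wi v \<sigma>" for v \<sigma>
    using disjoint that unfolding temporally_disjoint_iff_occupies[OF wi wj] by blast
  have on_bounce: "(a, b, t) \<in> set Wi" "(b, a, t') \<in> set Wi"
    using bounce consecutive_pairs_subset by blast+
  have "occupies Wi a t" "occupies Wi a t'"
    using occupies_tsrc[OF wi on_bounce(1)] occupies_ttgt[OF wi on_bounce(2)]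
    by (simp_all add: tsrc_def ttgt_def ttime_def)
  then have a_free: "\<not> occupies Wj a t" "\<not> occupies Wj a t'"
    using free by blast+
  obtain l h where lh: "(a, l, h) \<in> occupations Wj" "l \<le> \<tau>" "\<tau> \<le> h"
    using occ unfolding occupies_def by blast
  have inside: "t < l" "h < t'"
    using occupiesI[OF lh(1), of t] occupiesI[OF lh(1), of t'] a_free lh(2,3) \<tau> by linarith+
  from lh(1) show ?thesis
  proof (cases rule: occupationsE)
    case 1
    have "hd Wj \<in> set Wj" using 1(1) by simp
    moreover have "tsrc (hd Wj) = sj" using wj 1(1) unfolding temporal_walk_iff by blast
    ultimately have "(sj, ttgt (hd Wj), l) \<in> set Wj" "{a, ttgt (hd Wj)} \<in> underlying_edges T E"
      using 1 transition_eta[of "hd Wj"] walk_underlying_edge[OF wj] by metis+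
    then show ?thesis using inside 1(4) by auto
  next
    case 2
    have "last Wj \<in> set Wj" using 2(1) by simp
    moreover have "ttgt (last Wj) = zj" using wj 2(1) unfolding temporal_walk_iff by blast
    ultimately have "(tsrc (last Wj), zj, l) \<in> set Wj" "{tsrc (last Wj), a} \<in> underlying_edges T E"
      using 2 transition_eta[of "last Wj"] walk_underlying_edge[OF wj] by metis+
    then show ?thesis using inside 2(4) by (auto simp: insert_commute)
  next
    case (3 e e')
    have e: "e \<in> set Wj" "e' \<in> set Wj" using 3(1) consecutive_pairs_subset by blast+
    have "tsrc e' = a" using walk_linked[OF wj 3(1)] 3(2) by (simp add: linked_def)
    have b_busy: "occupies Wi b \<sigma>" if "t \<le> \<sigma>" "\<sigma> \<le> t'" for \<sigma>
      using occupies_step[OF bounce] that by (simp add: ttgt_def ttime_def)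
    have "occupies Wj (tsrc e) l" "occupies Wj (ttgt e') h"
      using occupies_tsrc[OF wj e(1)] occupies_ttgt[OF wj e(2)] 3(3,4) by simp_all
    moreover have "occupies Wi b l" "occupies Wi b h"
      using b_busy inside lh(2,3) \<tau> by simp_all
    ultimately have "tsrc e \<noteq> b" "ttgt e' \<noteq> b" using free by blast+
    moreover have "{a, tsrc e} \<in> underlying_edges T E" "{a, ttgt e'} \<in> underlying_edges T E"
      using walk_underlying_edge[OF wj e(1)] walk_underlying_edge[OF wj e(2)] 3(2) \<open>tsrc e' = a\<close>
      by (simp_all add: insert_commute)
    moreover have "{a, b} \<in> underlying_edges T E"
      using walk_underlying_edge[OF wi on_bounce(1)] by (simp add: tsrc_def ttgt_def)
    ultimately have "tsrc e = ttgt e'" using temporal_line_neighbour_unique[OF line] by blast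
    then have "e = (tsrc e, a, l)" "e' = (a, tsrc e, h)"
      using 3(2-4) \<open>tsrc e' = a\<close> transition_eta[of e] transition_eta[of e'] by simp_all
    then show ?thesis using 3(1) inside by metis
  qed
qed

definition underlying_walk :: "nat \<Rightarrow> (nat \<Rightarrow> 'a set set) \<Rightarrow> nat \<Rightarrow> 'a \<Rightarrow> 'a \<Rightarrow> bool" where
  "underlying_walk T E n u v \<longleftrightarrow> (\<exists>p. length p = Suc n \<and> hd p = u \<and> last p = v \<and>
     successively (\<lambda>x y. {x, y} \<in> underlying_edges T E) p)"

lemma underlying_dist_le: "underlying_walk T E n u v \<Longrightarrow> underlying_dist T E u v \<le> n"
  unfolding underlying_dist_def underlying_walk_def successively_conv_nth by (rule Least_le)

lemma underlying_walk_edge: "{u, v} \<in> underlying_edges T E \<Longrightarrow> underlying_walk T E 1 u v"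
  unfolding underlying_walk_def by (intro exI[of _ "[u, v]"]) simp

lemma underlying_walk_Cons:
  assumes "{u, w} \<in> underlying_edges T E" "underlying_walk T E n w v"
  shows "underlying_walk T E (Suc n) u v"
proof -
  obtain p where "length p = Suc n" "hd p = w" "last p = v"
    "successively (\<lambda>x y. {x, y} \<in> underlying_edges T E) p"
    using assms(2) unfolding underlying_walk_def by blast
  then show ?thesis
    using assms(1) unfolding underlying_walk_def
    by (intro exI[of _ "u # p"]) (auto simp: successively_Cons)
qed

lemma bounce_chain:
  assumes line: "temporal_line V T E" and sol: "tdw_solution V T E S Ws"
    and opt: "\<And>Ws'. tdw_solution V T E S Ws' \<Longrightarrow> total_length Ws \<le> total_length Ws'"
  shows "i < length S \<Longrightarrow> ((a, b, t), (b, a, t')) \<in> consecutive_pairs (Ws ! i) \<Longrightarrow>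
    \<exists>J j a' t'' n. J \<subseteq> {..<length S} - {i} \<and> j \<in> J \<and> t < t'' \<and> t'' < t' \<and>
      ((fst (S ! j), a', t'') \<in> set (Ws ! j) \<or> (a', snd (S ! j), t'') \<in> set (Ws ! j)) \<and>
      underlying_walk T E n a a' \<and> n \<le> card J \<and>
      (\<forall>m \<in> J. \<exists>e \<in> set (Ws ! m). t < ttime e \<and> ttime e < t')"
  \<comment> \<open>The last conjunct keeps walk \<open>i\<close> out of the sets \<open>J\<close> found for bounces nested in \<open>(t, t')\<close>.\<close>
proof (induction "t' - t" arbitrary: i a b t t' rule: less_induct)
  case less
  obtain j \<tau> where j: "j < length S" "j \<noteq> i" and \<tau>: "t < \<tau>" "\<tau> < t'" "occupies (Ws ! j) a \<tau>"
    using bounce_blocked[OF sol opt less.prems] by blast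
  note wi = tdw_solution_walk[OF sol less.prems(1)] and wj = tdw_solution_walk[OF sol j(1)]
  have disjoint: "temporally_disjoint (Ws ! i) (Ws ! j)"
    using tdw_solution_disjoint[OF sol less.prems(1) j(1)] j(2) by simp
  from blocker_cases[OF line wi less.prems(2) wj disjoint \<tau>(3,1,2)] consider
      (terminal) x l where "t < l" "l < t'" "{a, x} \<in> underlying_edges T E"
        "(fst (S ! j), x, l) \<in> set (Ws ! j) \<or> (x, snd (S ! j), l) \<in> set (Ws ! j)"
    | (bounce) x l h where "t < l" "h < t'" "((x, a, l), (a, x, h)) \<in> consecutive_pairs (Ws ! j)"
    by blast
  then show ?case
  proof cases
    case (terminal x l)
    note l = terminal(1,2) and edge = terminal(3) and terminal = terminal(4)
    have "\<forall>m \<in> {j}. \<exists>e \<in> set (Ws ! m). t < ttime e \<and> ttime e < t'"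
      using terminal l by (metis singletonD snd_conv ttime_def)
    moreover have "{j} \<subseteq> {..<length S} - {i}" "j \<in> {j}" "1 \<le> card {j}" using j by auto
    ultimately show ?thesis using l terminal underlying_walk_edge[OF edge] by blast
  next
    case (bounce x l h)
    note l = bounce(1,2) and bounce_j = bounce(3)
    have "l < h" using walk_linked[OF wj bounce_j] by (simp add: linked_def ttime_def)
    then have "h - l < t' - t" using l by linarith
    then obtain J j' a' t'' n where J: "J \<subseteq> {..<length S} - {j}" "j' \<in> J" "l < t''" "t'' < h"
      "(fst (S ! j'), a', t'') \<in> set (Ws ! j') \<or> (a', snd (S ! j'), t'') \<in> set (Ws ! j')"
      "underlying_walk T E n x a'" "n \<le> card J"
      and inner: "\<forall>m \<in> J. \<exists>e \<in> set (Ws ! m). l < ttime e \<and> ttime e < h"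
      using less.hyps[OF _ j(1) bounce_j] by blast
    have "i \<notin> J"
    proof
      assume "i \<in> J"
      then obtain e where e: "e \<in> set (Ws ! i)" "l < ttime e" "ttime e < h"
        using inner by blast
      have "ttime e \<le> t \<or> t' \<le> ttime e"
        using walk_no_transition_between[OF wi less.prems(2) e(1)] by (simp add: ttime_def)
      then show False using e(2,3) l by linarith
    qed
    have x_in: "(x, a, l) \<in> set (Ws ! j)" using bounce_j consecutive_pairs_subset by blast
    have "{a, x} \<in> underlying_edges T E"
      using walk_underlying_edge[OF wj x_in] by (simp add: tsrc_def ttgt_def insert_commute)
    then have "underlying_walk T E (Suc n) a a'" using J(6) by (rule underlying_walk_Cons)
    moreover have "j \<notin> J" using J(1) by blast
    then have "Suc n \<le> card (insert j J)" "insert j J \<subseteq> {..<length S} - {i}"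
      using J(1,7) finite_subset[OF J(1)] j \<open>i \<notin> J\<close> by auto
    moreover have "\<exists>e \<in> set (Ws ! m). t < ttime e \<and> ttime e < t'" if m_in: "m \<in> insert j J" for m
    proof (cases "m = j")
      case True
      then show ?thesis
        using x_in l \<open>l < h\<close> by (intro bexI[of _ "(x, a, l)"]) (auto simp: ttime_def)
    next
      case False
      then obtain e where "e \<in> set (Ws ! m)" "l < ttime e" "ttime e < h"
        using m_in inner by auto
      then show ?thesis using l by (meson less_trans)
    qed
    moreover have "j' \<in> insert j J" "t < t''" "t'' < t'" using J(2-4) l by auto
    ultimately show ?thesis using J(5) by blast
  qed
qed

theorem mainTheorem7:
  fixes V :: "'a set" and T :: nat and E :: "nat \<Rightarrow> 'a set set"
    and S :: "('a \<times> 'a) list" and Ws :: "'a transition list list"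
  assumes line: "temporal_line V T E"
    and sol: "tdw_solution V T E S Ws"
    and opt: "\<And>Ws'. tdw_solution V T E S Ws' \<Longrightarrow> total_length Ws \<le> total_length Ws'"
    and i: "i < length S"
    and k: "Suc k < length (Ws ! i)"
    and tr1: "Ws ! i ! k = (a, b, t)"
    and tr2: "Ws ! i ! Suc k = (b, a, t')"
    and tt: "t < t'"
  shows "\<exists>j < length S. j \<noteq> i \<and> Ws ! j \<noteq> Ws ! i \<and>
           (\<exists>a' t''. t < t'' \<and> t'' < t' \<and> underlying_dist T E a a' \<le> length S \<and>
              ((fst (S ! j), a', t'') \<in> set (Ws ! j) \<or> (a', snd (S ! j), t'') \<in> set (Ws ! j)))"
proof -
  have "(Ws ! i ! k, Ws ! i ! Suc k) \<in> consecutive_pairs (Ws ! i)"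
    using k unfolding consecutive_pairs_conv_nth by blast
  then have "((a, b, t), (b, a, t')) \<in> consecutive_pairs (Ws ! i)"
    by (simp only: tr1 tr2)
  from bounce_chain[OF line sol opt i this] obtain J j a' t'' n
    where J: "J \<subseteq> {..<length S} - {i}" "j \<in> J" "t < t''" "t'' < t'"
      "(fst (S ! j), a', t'') \<in> set (Ws ! j) \<or> (a', snd (S ! j), t'') \<in> set (Ws ! j)"
      "underlying_walk T E n a a'" "n \<le> card J"
    by blast
  have j: "j < length S" "j \<noteq> i" using J(1,2) by auto
  have "card J \<le> length S" using card_mono[of "{..<length S}" J] J(1) by auto
  then have "underlying_dist T E a a' \<le> length S"
    using underlying_dist_le[OF J(6)] J(7) by linarith
  moreover have "Ws ! j \<noteq> Ws ! i"
  proof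
    assume same: "Ws ! j = Ws ! i"
    have "temporally_disjoint (Ws ! i) (Ws ! j)"
      using tdw_solution_disjoint[OF sol i j(1)] j(2) by simp
    moreover have "Ws ! i \<noteq> []" using k by auto
    ultimately show False using not_temporally_disjoint_self[of "Ws ! i"] same by simp
  qed
  ultimately show ?thesis using j J(3-5) by blast
qed

end
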